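(* Let $n\ge 1$, $\bar\gamma=(\gamma_1,\dots,\gamma_n)\in\mathbb{N}^n$, and let $s_1,\dots,s_n$ be i.i.d. with $\Pr[s_i=k]=2^{-(k+1)}$ for $k\ge 0$; let $A(\bar\gamma)$ be the event that the closed intervals $[s_i,s_i+\gamma_i]$ are pairwise disjoint. Then $$\Pr[A(\bar\gamma)]=c(n)\cdot 2^{-\binom{n+1}{2}}\sum_{\sigma\in\mathrm{Sym}_n}\prod_{i=1}^{n-1}2^{-(n-i)\gamma_{\sigma(i)}},$$ where $c(n)=2\big/\prod_{i=1}^{n-1}(1-2^{-(n+1-i)})$ satisfies $c(n)\in[2,4]$ for all $n$, and $c(2)=8/3$.
   Context: $\mathbb{N}=\{0,1,2,\dots\}$; $\mathrm{Sym}_n$ is the set of all permutations of $\{1,\dots,n\}$. *)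

theory Defs
  imports "HOL-Probability.Probability" "HOL-Combinatorics.Permutations"
begin

definition start_pmf :: "nat \<Rightarrow> (nat \<Rightarrow> nat) pmf" where
  "start_pmf n = Pi_pmf {1..n} 0 (\<lambda>_. geometric_pmf (1/2))"

definition event_A :: "nat \<Rightarrow> (nat \<Rightarrow> nat) \<Rightarrow> (nat \<Rightarrow> nat) set" where
  "event_A n \<gamma> = {s. \<forall>i\<in>{1..n}. \<forall>j\<in>{1..n}. i \<noteq> j \<longrightarrow>
      {real (s i)..real (s i + \<gamma> i)} \<inter> {real (s j)..real (s j + \<gamma> j)} = {}}"

definition c_const :: "nat \<Rightarrow> real" where
  "c_const n = 2 / (\<Prod>i=1..n-1. (1 - (1/2) ^ (n + 1 - i)))"

end

theory Submission
  imports Defs "HOL-Combinatorics.Multiset_Permutations"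
begin

text \<open>
  For i.i.d. geometric start points s_i, the intervals [s_i, s_i + \<gamma>_i] are
  pairwise disjoint exactly when, for one (and only one) ordering xs of the indices, each
  interval begins strictly after the previous one ends.  So the probability of A(\<gamma>) is the
  sum over all orderings of the probability of the "spaced" configuration in that order.

  That probability is computed by peeling off the first index of the ordering: conditioned
  on its start point y, the remaining k intervals must start after y + \<gamma>_x, which by
  induction costs a factor 2^-(k(y + \<gamma>_x + 1)); summing the resulting geometric series
  over y gives a product formula (spaced_weight).  Its closed form involves the
  q-Pochhammer product (1/2;1/2)_n = \<Prod>(1 - 2^-(i+1)), whose reciprocal is c(n); the
  bounds 1/4 < (1/2;1/2)_n \<le> 1/2 give c(n) \<in> [2,4].  Finally orderings of {1..n} are
  identified with permutations \<sigma> via \<sigma> \<mapsto> [\<sigma> 1, ..., \<sigma> n].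
\<close>

lemma half_power_le_1: "(1/2::real) ^ k \<le> 1"
  by (rule power_le_one) simp_all

lemma tail_geometric_sums:
  fixes r a :: real and t :: nat
  assumes "\<bar>r\<bar> < 1"
  shows "(\<lambda>y. if t \<le> y then a * r ^ y else 0) sums (a * r ^ t / (1 - r))"
proof -
  define f where "f = (\<lambda>y. if t \<le> y then a * r ^ y else 0)"
  have "(\<lambda>y. (a * r ^ t) * r ^ y) sums ((a * r ^ t) * (1 / (1 - r)))"
    using assms by (intro sums_mult geometric_sums) simp
  then have "(\<lambda>y. f (y + t)) sums (a * r ^ t / (1 - r))"
    by (simp add: f_def power_add mult_ac)
  then have "f sums (a * r ^ t / (1 - r) + (\<Sum>y<t. f y))"
    by (rule sums_iff_shift[THEN iffD1])
  then show ?thesis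
    by (simp add: f_def)
qed

fun spaced :: "(nat \<Rightarrow> nat) \<Rightarrow> nat \<Rightarrow> nat list \<Rightarrow> (nat \<Rightarrow> nat) \<Rightarrow> bool" where
  "spaced \<gamma> t [] s = True"
| "spaced \<gamma> t (x # xs) s = (t \<le> s x \<and> spaced \<gamma> (s x + \<gamma> x + 1) xs s)"

text \<open>The probability of being spaced in the order xs (with t = 0), as a product over the list:
  the head contributes a geometric tail sum, see prob_spaced.\<close>

fun spaced_weight :: "(nat \<Rightarrow> nat) \<Rightarrow> nat list \<Rightarrow> real" where
  "spaced_weight \<gamma> [] = 1"
| "spaced_weight \<gamma> (x # xs) =
     (1/2) * (1/2) ^ (length xs * (\<gamma> x + 1)) / (1 - (1/2) ^ Suc (length xs)) * spaced_weight \<gamma> xs"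

lemma spaced_weight_nonneg: "spaced_weight \<gamma> xs \<ge> 0"
proof (induction xs)
  case (Cons x xs)
  then show ?case
    using half_power_le_1[of "length xs"] by simp
qed simp

lemma spaced_fun_upd: "x \<notin> set xs \<Longrightarrow> spaced \<gamma> t xs (s(x := y)) = spaced \<gamma> t xs s"
  by (induction xs arbitrary: t) auto

lemma prob_spaced:
  assumes "finite I" "distinct xs" "set xs \<subseteq> I"
  shows "emeasure (Pi_pmf I 0 (\<lambda>_. geometric_pmf (1/2))) {s. spaced \<gamma> t xs s}
         = ennreal ((1/2) ^ (t * length xs) * spaced_weight \<gamma> xs)"
  using assms
proof (induction xs arbitrary: I t)
  case Nil
  then show ?case by (simp add: measure_pmf.emeasure_space_1[simplified])
next
  case (Cons x xs)
  define G where "G = geometric_pmf (1/2::real)"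
  define k where "k = length xs"
  define W where "W = spaced_weight \<gamma> xs"
  define J where "J = I - {x}"
  have x: "x \<in> I" "x \<notin> set xs" using Cons.prems by auto
  have IH: "emeasure (Pi_pmf J 0 (\<lambda>_. G)) {s. spaced \<gamma> t' xs s} = ennreal ((1/2) ^ (t' * k) * W)" for t'
    using Cons.prems unfolding G_def k_def W_def J_def by (intro Cons.IH) auto
  have split: "Pi_pmf I 0 (\<lambda>_. G) = bind_pmf G (\<lambda>y. map_pmf (\<lambda>s. s(x := y)) (Pi_pmf J 0 (\<lambda>_. G)))"
    using Pi_pmf_insert'[of J x 0 "\<lambda>_. G"] Cons.prems x
    by (simp add: J_def insert_absorb map_pmf_def)
  have slice: "emeasure (map_pmf (\<lambda>s. s(x := y)) (Pi_pmf J 0 (\<lambda>_. G))) {s. spaced \<gamma> t (x # xs) s}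
      = ennreal (if t \<le> y then (1/2) ^ ((y + \<gamma> x + 1) * k) * W else 0)" for y
  proof -
    have "(\<lambda>s. s(x := y)) -` {s. spaced \<gamma> t (x # xs) s}
        = (if t \<le> y then {s. spaced \<gamma> (y + \<gamma> x + 1) xs s} else {})"
      using x by (auto simp: spaced_fun_upd)
    then show ?thesis using IH by simp
  qed
  define r :: real where "r = (1/2) ^ Suc k"
  define a :: real where "a = (1/2) * (1/2) ^ (k * (\<gamma> x + 1)) * W"
  have summand: "pmf G y * (if t \<le> y then (1/2) ^ ((y + \<gamma> x + 1) * k) * W else 0)
      = (if t \<le> y then a * r ^ y else 0)" for y
  proof -
    have "r ^ y = (1/2) ^ y * (1/2) ^ (k * y)"
      unfolding r_def power_Suc power_mult_distrib power_mult ..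
    then show ?thesis
      by (simp add: G_def a_def power_add power_mult algebra_simps)
  qed
  have r: "0 \<le> r" "r < 1"
    using half_power_le_1[of k] by (simp_all add: r_def)
  have a: "0 \<le> a"
    by (simp add: a_def W_def spaced_weight_nonneg)
  have "emeasure (Pi_pmf I 0 (\<lambda>_. G)) {s. spaced \<gamma> t (x # xs) s}
      = (\<Sum>y. ennreal (if t \<le> y then a * r ^ y else 0))"
    unfolding split emeasure_bind_pmf slice
    by (simp add: nn_integral_measure_pmf nn_integral_count_space_nat summand[symmetric]
        ennreal_mult' W_def spaced_weight_nonneg)
  also have "\<dots> = ennreal (a * r ^ t / (1 - r))"
    using tail_geometric_sums[of r t a] r a by (subst sums_unique[symmetric]) simp_all
  also have "a * r ^ t / (1 - r) = (1/2) ^ (t * length (x # xs)) * spaced_weight \<gamma> (x # xs)"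
  proof -
    have "r ^ t = (1/2) ^ (t * length (x # xs))"
      unfolding r_def k_def power_mult[symmetric] by (simp add: mult.commute)
    then show ?thesis
      by (simp add: a_def r_def k_def W_def)
  qed
  finally show ?case unfolding G_def .
qed

definition separated :: "(nat \<Rightarrow> nat) \<Rightarrow> nat set \<Rightarrow> (nat \<Rightarrow> nat) \<Rightarrow> bool" where
  "separated \<gamma> I s \<longleftrightarrow> (\<forall>i\<in>I. \<forall>j\<in>I. i \<noteq> j \<longrightarrow> s i + \<gamma> i < s j \<or> s j + \<gamma> j < s i)"

lemma nat_intervals_disjoint_iff:
  "{real a..real (a + g)} \<inter> {real b..real (b + h)} = {} \<longleftrightarrow> a + g < b \<or> b + h < a"
proof
  assume disj: "{real a..real (a + g)} \<inter> {real b..real (b + h)} = {}"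
  show "a + g < b \<or> b + h < a"
  proof (rule ccontr)
    assume "\<not> (a + g < b \<or> b + h < a)"
    then have "real (max a b) \<in> {real a..real (a + g)} \<inter> {real b..real (b + h)}"
      by auto
    with disj show False by blast
  qed
qed auto

lemma event_A_separated: "event_A n \<gamma> = {s. separated \<gamma> {1..n} s}"
  unfolding event_A_def separated_def nat_intervals_disjoint_iff ..

lemma spaced_lower_bound: "spaced \<gamma> t xs s \<Longrightarrow> y \<in> set xs \<Longrightarrow> t \<le> s y"
  by (induction xs arbitrary: t) fastforce+

lemma spaced_nth:
  "spaced \<gamma> t xs s \<Longrightarrow> i < j \<Longrightarrow> j < length xs \<Longrightarrow> s (xs ! i) + \<gamma> (xs ! i) < s (xs ! j)"
proof (induction xs arbitrary: t i j)
  case (Cons x xs)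
  then obtain j' where j: "j = Suc j'" by (cases j) auto
  show ?case
  proof (cases i)
    case 0
    have "xs ! j' \<in> set xs" using Cons.prems j by simp
    then have "s x + \<gamma> x + 1 \<le> s (xs ! j')"
      using Cons.prems(1) spaced_lower_bound by auto
    then show ?thesis using 0 j by simp
  next
    case (Suc i')
    then show ?thesis using Cons j by auto
  qed
qed simp

lemma spaced_strictly_sorted: "spaced \<gamma> t xs s \<Longrightarrow> sorted_wrt (<) (map s xs)"
  unfolding sorted_wrt_iff_nth_less using spaced_nth[of \<gamma> t xs s] by fastforce

lemma sorted_separated_imp_spaced:
  assumes "sorted (map s xs)" "separated \<gamma> (set xs) s" "distinct xs" "\<forall>y\<in>set xs. t \<le> s y"
  shows "spaced \<gamma> t xs s"
  using assms
proof (induction xs arbitrary: t)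
  case (Cons x xs)
  have "s x + \<gamma> x + 1 \<le> s y" if y: "y \<in> set xs" for y
  proof -
    have "x \<noteq> y" "s x \<le> s y" using Cons.prems(1,3) y by auto
    then show ?thesis using Cons.prems(2) y unfolding separated_def by fastforce
  qed
  moreover have "separated \<gamma> (set xs) s"
    using Cons.prems(2) unfolding separated_def by simp
  ultimately show ?case using Cons by auto
qed simp

lemma separated_iff_spaced:
  assumes "finite I"
  shows "separated \<gamma> I s \<longleftrightarrow> (\<exists>xs\<in>permutations_of_set I. spaced \<gamma> 0 xs s)"
proof
  assume sep: "separated \<gamma> I s"
  obtain ys where ys: "set ys = I" "distinct ys"
    using finite_distinct_list[OF assms] by blast
  define xs where "xs = sort_key s ys"
  have "xs \<in> permutations_of_set I"
    using ys by (auto simp: xs_def)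
  moreover have "spaced \<gamma> 0 xs s"
    using sep ys by (intro sorted_separated_imp_spaced) (simp_all add: xs_def)
  ultimately show "\<exists>xs\<in>permutations_of_set I. spaced \<gamma> 0 xs s" by blast
next
  assume "\<exists>xs\<in>permutations_of_set I. spaced \<gamma> 0 xs s"
  then obtain xs where xs: "set xs = I" "distinct xs" and sp: "spaced \<gamma> 0 xs s"
    by (auto simp: permutations_of_set_def)
  show "separated \<gamma> I s"
    unfolding separated_def
  proof (intro ballI impI)
    fix i j assume ij: "i \<in> I" "j \<in> I" "i \<noteq> j"
    obtain a b where ab: "a < length xs" "b < length xs" "xs ! a = i" "xs ! b = j"
      using ij xs(1) by (metis in_set_conv_nth)
    then have "a < b \<or> b < a" using ij(3) by (metis linorder_neqE_nat)
    then show "s i + \<gamma> i < s j \<or> s j + \<gamma> j < s i"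
      using spaced_nth[OF sp, of a b] spaced_nth[OF sp, of b a] ab by auto
  qed
qed

lemma spaced_order_unique:
  assumes "xs \<in> permutations_of_set I" "ys \<in> permutations_of_set I"
    and "spaced \<gamma> t xs s" "spaced \<gamma> t' ys s"
  shows "xs = ys"
proof -
  have sets: "set xs = I" "set ys = I"
    using assms(1,2) by (auto dest: permutations_of_setD)
  have sorted: "sorted_wrt (<) (map s xs)" "sorted_wrt (<) (map s ys)"
    using assms(3,4) by (auto intro: spaced_strictly_sorted)
  then have "map s xs = map s ys"
    using sets by (intro strict_sorted_equal) simp_all
  moreover have "inj_on s (set xs \<union> set ys)"
    using sorted(1) sets by (simp add: strict_sorted_iff distinct_map)
  ultimately show ?thesis
    using inj_on_map_eq_map by blast
qed

theorem prob_separated: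
  assumes "finite I"
  shows "measure (Pi_pmf I 0 (\<lambda>_. geometric_pmf (1/2))) {s. separated \<gamma> I s}
         = (\<Sum>xs\<in>permutations_of_set I. spaced_weight \<gamma> xs)"
proof -
  let ?M = "Pi_pmf I 0 (\<lambda>_. geometric_pmf (1/2::real))"
  let ?B = "\<lambda>xs. {s. spaced \<gamma> 0 xs s}"
  have "{s. separated \<gamma> I s} = (\<Union>xs\<in>permutations_of_set I. ?B xs)"
    using separated_iff_spaced[OF assms] by blast
  moreover have "disjoint_family_on ?B (permutations_of_set I)"
    unfolding disjoint_family_on_def using spaced_order_unique by blast
  ultimately have "measure ?M {s. separated \<gamma> I s} = (\<Sum>xs\<in>permutations_of_set I. measure ?M (?B xs))"
    by (simp add: measure_pmf.finite_measure_finite_Union)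
  also have "\<dots> = (\<Sum>xs\<in>permutations_of_set I. spaced_weight \<gamma> xs)"
  proof (rule sum.cong[OF refl])
    fix xs assume "xs \<in> permutations_of_set I"
    then have "emeasure ?M (?B xs) = ennreal (spaced_weight \<gamma> xs)"
      using prob_spaced[OF assms, of xs \<gamma> 0] by (simp add: permutations_of_set_def)
    then show "measure ?M (?B xs) = spaced_weight \<gamma> xs"
      by (simp add: measure_pmf.emeasure_eq_measure spaced_weight_nonneg)
  qed
  finally show ?thesis .
qed

definition qpoch_half :: "nat \<Rightarrow> real" where
  "qpoch_half n = (\<Prod>i<n. 1 - (1/2) ^ Suc i)"

text \<open>Closed form of spaced_weight: the exponents k(\<gamma>_x + 1) contributed by the successive
  heads add up to a triangular number plus \<Sum>(k - 1 - j) \<gamma>(xs!j).\<close>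

lemma spaced_weight_closed_form:
  "spaced_weight \<gamma> xs * qpoch_half (length xs)
   = (1/2) ^ (Suc (length xs) choose 2) * (\<Prod>j<length xs. (1/2) ^ ((length xs - 1 - j) * \<gamma> (xs ! j)))"
proof (induction xs)
  case Nil
  then show ?case by (simp add: qpoch_half_def numeral_2_eq_2)
next
  case (Cons x xs)
  define k where "k = length xs"
  define P where "P = (\<Prod>j<k. (1/2::real) ^ ((k - 1 - j) * \<gamma> (xs ! j)))"
  have ne: "1 - (1/2::real) ^ Suc k \<noteq> 0"
    using half_power_le_1[of k] by simp
  have choose: "Suc (Suc k) choose 2 = (Suc k choose 2) + Suc k"
    by (simp add: numeral_2_eq_2)
  have "spaced_weight \<gamma> (x # xs) * qpoch_half (Suc k)
      = (1/2) * (1/2) ^ (k * (\<gamma> x + 1)) * (spaced_weight \<gamma> xs * qpoch_half k)"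
    using ne by (simp add: qpoch_half_def k_def field_simps)
  also have "\<dots> = (1/2) * (1/2) ^ (k * (\<gamma> x + 1)) * ((1/2) ^ (Suc k choose 2) * P)"
    using Cons.IH by (simp add: k_def P_def)
  also have "\<dots> = (1/2) ^ (Suc (Suc k) choose 2) * ((1/2) ^ (k * \<gamma> x) * P)"
    unfolding choose by (simp add: power_add algebra_simps)
  also have "\<dots> = (1/2) ^ (Suc (Suc k) choose 2)
      * (\<Prod>j<Suc k. (1/2) ^ ((Suc k - 1 - j) * \<gamma> ((x # xs) ! j)))"
    by (simp add: P_def prod.lessThan_Suc_shift del: prod.lessThan_Suc)
  finally show ?case by (simp add: k_def)
qed

lemma c_const_qpoch_half:
  assumes "n \<ge> 1"
  shows "c_const n = 1 / qpoch_half n"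
proof -
  obtain m where n: "n = Suc m" using assms by (cases n) auto
  have "(\<Prod>i=1..n-1. 1 - (1/2::real) ^ (n + 1 - i)) = (\<Prod>j<m. 1 - (1/2) ^ Suc (Suc j))"
    unfolding n
    by (rule prod.reindex_bij_witness[where i="\<lambda>j. m - j" and j="\<lambda>i. m - i"])
       (auto simp: Suc_diff_le)
  also have "\<dots> = 2 * qpoch_half n"
    by (simp add: qpoch_half_def n prod.lessThan_Suc_shift del: prod.lessThan_Suc)
  finally show ?thesis
    unfolding c_const_def by simp
qed

text \<open>Each new factor 1 - h with h = 2^-(m+1) \<le> 1/4 reduces the excess over 1/4 by at most half,
  which gives the invariant lower bound 1/4 + 2^-(n+1).\<close>

lemma qpoch_half_bounds:
  assumes "n \<ge> 1"
  shows "1/4 + (1/2) ^ Suc n \<le> qpoch_half n \<and> qpoch_half n \<le> 1/2"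
  using assms
proof (induction n rule: dec_induct)
  case base
  then show ?case by (simp add: qpoch_half_def)
next
  case (step m)
  define h :: real where "h = (1/2) ^ Suc m"
  have h: "0 \<le> h" "h \<le> 1/4"
    using power_decreasing[of 2 "Suc m" "1/2::real"] step(1) by (simp_all add: h_def power2_eq_square)
  have step_eq: "qpoch_half (Suc m) = qpoch_half m * (1 - h)"
    by (simp add: qpoch_half_def h_def)
  have "(1/4 + h) * (1 - h) \<le> qpoch_half m * (1 - h)"
    using step.IH h by (intro mult_right_mono) (auto simp: h_def)
  moreover have "1/4 + h/2 \<le> (1/4 + h) * (1 - h)"
  proof -
    have "h * h \<le> h * (1/4)"
      using h by (intro mult_left_mono) auto
    moreover have "(1/4 + h) * (1 - h) = 1/4 + h/2 + (h * (1/4) - h * h)"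
      by (simp add: field_simps)
    ultimately show ?thesis by linarith
  qed
  moreover have "qpoch_half m * (1 - h) \<le> qpoch_half m"
  proof (rule mult_left_le)
    show "0 \<le> qpoch_half m"
      using step.IH h unfolding h_def by linarith
  qed (use h in simp)
  moreover have "(1/2::real) ^ Suc (Suc m) = h/2"
    by (simp add: h_def)
  ultimately show ?case
    using step.IH step_eq by linarith
qed

lemma c_const_bounds:
  assumes "n \<ge> 1"
  shows "c_const n \<in> {2..4}"
proof -
  have "1/4 \<le> qpoch_half n" "qpoch_half n \<le> 1/2"
    using qpoch_half_bounds[OF assms] zero_le_power[of "1/2::real" "Suc n"] by linarith+
  then show ?thesis
    by (simp add: c_const_qpoch_half[OF assms] field_simps)
qed

lemma c_const_2: "c_const 2 = 8/3"
  by (simp add: c_const_def power2_eq_square)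

text \<open>Permutations of a finite set correspond bijectively to its orderings, via a fixed
  enumeration L of the set; the surjectivity follows by counting (both sides have card! elements).\<close>

lemma permutes_map_bij:
  assumes "distinct L"
  shows "bij_betw (\<lambda>\<sigma>. map \<sigma> L) {\<sigma>. \<sigma> permutes set L} (permutations_of_set (set L))"
proof (rule bij_betw_imageI)
  show inj: "inj_on (\<lambda>\<sigma>. map \<sigma> L) {\<sigma>. \<sigma> permutes set L}"
  proof (rule inj_onI)
    fix \<sigma> \<tau> assume "\<sigma> \<in> {\<sigma>. \<sigma> permutes set L}" "\<tau> \<in> {\<sigma>. \<sigma> permutes set L}" "map \<sigma> L = map \<tau> L"
    then have "\<sigma> permutes set L" "\<tau> permutes set L" "\<forall>x\<in>set L. \<sigma> x = \<tau> x"
      by simp_all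
    then show "\<sigma> = \<tau>"
      by (intro ext) (metis permutes_not_in)
  qed
  have L: "L \<in> permutations_of_set (set L)"
    using assms by auto
  have "(\<lambda>\<sigma>. map \<sigma> L) ` {\<sigma>. \<sigma> permutes set L} \<subseteq> permutations_of_set (set L)"
    using permutations_of_set_image_permutes L by blast
  moreover have "card ((\<lambda>\<sigma>. map \<sigma> L) ` {\<sigma>. \<sigma> permutes set L}) = card (permutations_of_set (set L))"
    using card_image[OF inj] by (simp add: card_permutations)
  ultimately show "(\<lambda>\<sigma>. map \<sigma> L) ` {\<sigma>. \<sigma> permutes set L} = permutations_of_set (set L)"
    by (intro card_subset_eq) simp_all
qed

lemma spaced_weight_permutation:
  assumes "n \<ge> 1" "\<sigma> permutes {1..n}"
  shows "spaced_weight \<gamma> (map \<sigma> [1..<Suc n])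
         = c_const n * (1/2) ^ ((n + 1) choose 2) * (\<Prod>i=1..n-1. (1/2) ^ ((n - i) * \<gamma> (\<sigma> i)))"
proof -
  let ?xs = "map \<sigma> [1..<Suc n]"
  have "(\<Prod>j<n. (1/2::real) ^ ((n - 1 - j) * \<gamma> (?xs ! j)))
      = (\<Prod>j<n. (1/2) ^ ((n - Suc j) * \<gamma> (\<sigma> (Suc j))))"
    by (intro prod.cong) (simp_all del: upt_Suc)
  also have "\<dots> = (\<Prod>i=1..n. (1/2) ^ ((n - i) * \<gamma> (\<sigma> i)))"
    by (simp only: prod.atLeast1_atMost_eq One_nat_def)
  also have "\<dots> = (\<Prod>i=1..n-1. (1/2) ^ ((n - i) * \<gamma> (\<sigma> i)))"
    using assms(1) by (cases n) simp_all
  finally have "spaced_weight \<gamma> ?xs * qpoch_half n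
      = (1/2) ^ ((n + 1) choose 2) * (\<Prod>i=1..n-1. (1/2) ^ ((n - i) * \<gamma> (\<sigma> i)))"
    using spaced_weight_closed_form[of \<gamma> ?xs] by (simp del: upt_Suc)
  moreover have "qpoch_half n > 0"
    using qpoch_half_bounds[OF assms(1)] zero_le_power[of "1/2::real" "Suc n"] by linarith
  ultimately show ?thesis
    by (simp add: c_const_qpoch_half[OF assms(1)] field_simps)
qed

theorem corollary1:
  fixes n :: nat and \<gamma> :: "nat \<Rightarrow> nat"
  assumes "n \<ge> 1"
  shows "measure_pmf.prob (start_pmf n) (event_A n \<gamma>) =
           c_const n * (1/2) ^ ((n + 1) choose 2) *
           (\<Sum>\<sigma>\<in>{\<sigma>. \<sigma> permutes {1..n}}. \<Prod>i=1..n-1. (1/2) ^ ((n - i) * \<gamma> (\<sigma> i)))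
       \<and> (\<forall>m\<ge>1. c_const m \<in> {2..4}) \<and> c_const 2 = 8/3"
proof (intro conjI allI impI)
  let ?L = "[1..<Suc n]"
  have L: "distinct ?L" "set ?L = {1..n}"
    by (simp_all add: atLeastLessThanSuc_atLeastAtMost del: upt_Suc)
  have "measure_pmf.prob (start_pmf n) (event_A n \<gamma>)
      = (\<Sum>xs\<in>permutations_of_set {1..n}. spaced_weight \<gamma> xs)"
    unfolding start_pmf_def event_A_separated by (rule prob_separated) simp
  also have "\<dots> = (\<Sum>\<sigma>\<in>{\<sigma>. \<sigma> permutes {1..n}}. spaced_weight \<gamma> (map \<sigma> ?L))"
    using sum.reindex_bij_betw[OF permutes_map_bij[OF L(1)], of "spaced_weight \<gamma>"]
    unfolding L(2) by (rule sym)
  also have "\<dots> = c_const n * (1/2) ^ ((n + 1) choose 2) *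
      (\<Sum>\<sigma>\<in>{\<sigma>. \<sigma> permutes {1..n}}. \<Prod>i=1..n-1. (1/2) ^ ((n - i) * \<gamma> (\<sigma> i)))"
    using spaced_weight_permutation[OF assms] by (simp add: sum_distrib_left)
  finally show "measure_pmf.prob (start_pmf n) (event_A n \<gamma>) =
      c_const n * (1/2) ^ ((n + 1) choose 2) *
      (\<Sum>\<sigma>\<in>{\<sigma>. \<sigma> permutes {1..n}}. \<Prod>i=1..n-1. (1/2) ^ ((n - i) * \<gamma> (\<sigma> i)))" .
  show "c_const m \<in> {2..4}" if "m \<ge> 1" for m
    using c_const_bounds[OF that] .
  show "c_const 2 = 8/3"
    by (rule c_const_2)
qed

end
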